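(* Let $\mathcal{B}=\langle V,F,E\rangle$ be a self-contained finite bipartite graph and let $\mathcal{S}_F$ be the set of its minimal self-contained sets. Let $S\in\mathcal{S}_F$ and let $\mathcal{B}'$ be the subgraph of $\mathcal{B}$ induced by $V'=V\setminus\mathrm{adj}_{\mathcal{B}}(S)$ and $F'=F\setminus S$. Then (1) $\mathcal{B}'$ is self-contained, and (2) every set in $\mathcal{S}_F\setminus\{S\}$ is minimal self-contained in $\mathcal{B}'$.
   Context: $\mathcal{B}=\langle V,F,E\rangle$ is bipartite with variable vertices $V$ and constraint vertices $F$; $\mathrm{adj}_{\mathcal{B}}(X)$ is the set of vertices adjacent to some vertex of $X$. A set $F'\subseteq F$ is self-contained (in $\mathcal{B}$) if $|F'|=|\mathrm{adj}_{\mathcal{B}}(F')|$ and $|F''|\le|\mathrm{adj}_{\mathcal{B}}(F'')|$ for all $F''\subseteq F'$. $\mathcal{B}$ is self-contained if $|F|=|V|$ and $F$ is self-contained. A non-empty self-contained set is minimal self-contained if none of its non-empty strict subsets is self-contained. *)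

theory Defs
  imports Main
begin

text \<open>A bipartite graph is given by variable vertices V :: 'v set, constraint vertices
F :: 'f set (disjoint since of different types) and edges E :: ('f \<times> 'v) set with E \<subseteq> F \<times> V.\<close>

definition bipartite :: "'v set \<Rightarrow> 'f set \<Rightarrow> ('f \<times> 'v) set \<Rightarrow> bool" where
  "bipartite V F E \<longleftrightarrow> E \<subseteq> F \<times> V"

definition adj :: "('f \<times> 'v) set \<Rightarrow> 'f set \<Rightarrow> 'v set" where
  "adj E X = {v. \<exists>f\<in>X. (f, v) \<in> E}"

definition self_contained_set :: "'v set \<Rightarrow> 'f set \<Rightarrow> ('f \<times> 'v) set \<Rightarrow> 'f set \<Rightarrow> bool" where
  "self_contained_set V F E F' \<longleftrightarrow> F' \<subseteq> F \<and> card F' = card (adj E F') \<and>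
     (\<forall>F''. F'' \<subseteq> F' \<longrightarrow> card F'' \<le> card (adj E F''))"

definition self_contained_graph :: "'v set \<Rightarrow> 'f set \<Rightarrow> ('f \<times> 'v) set \<Rightarrow> bool" where
  "self_contained_graph V F E \<longleftrightarrow> card F = card V \<and> self_contained_set V F E F"

definition minimal_self_contained :: "'v set \<Rightarrow> 'f set \<Rightarrow> ('f \<times> 'v) set \<Rightarrow> 'f set \<Rightarrow> bool" where
  "minimal_self_contained V F E S \<longleftrightarrow> S \<noteq> {} \<and> self_contained_set V F E S \<and>
     (\<forall>T. T \<subset> S \<and> T \<noteq> {} \<longrightarrow> \<not> self_contained_set V F E T)"

definition induced_edges :: "('f \<times> 'v) set \<Rightarrow> 'v set \<Rightarrow> 'f set \<Rightarrow> ('f \<times> 'v) set" where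
  "induced_edges E V' F' = E \<inter> (F' \<times> V')"

end

theory Submission
  imports Defs
begin

text \<open>Call \<open>X\<close> tight if \<open>card X = card (adj E X)\<close>. Under Hall's condition
\<open>card X \<le> card (adj E X)\<close>, submodularity of \<open>card \<circ> adj E\<close> makes tight sets closed under
intersection, and the neighbourhoods of two tight sets meet only in that of their intersection.
Hence distinct minimal self-contained sets are disjoint and have disjoint neighbourhoods.
Deleting a tight set \<open>S\<close> together with \<open>adj E S\<close> preserves Hall's condition, because
\<open>card X + card S \<le> card (adj E (X \<union> S)) = card (adj E X - adj E S) + card (adj E S)\<close>;
and every other minimal self-contained set keeps its whole neighbourhood, so its
self-contained subsets are the same before and after the deletion.\<close>

lemma adj_Un: "adj E (A \<union> B) = adj E A \<union> adj E B"
  unfolding adj_def by auto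

lemma adj_mono: "A \<subseteq> B \<Longrightarrow> adj E A \<subseteq> adj E B"
  unfolding adj_def by auto

lemma adj_Int_subset: "adj E (A \<inter> B) \<subseteq> adj E A \<inter> adj E B"
  unfolding adj_def by auto

lemma adj_subset: "bipartite V F E \<Longrightarrow> adj E X \<subseteq> V"
  unfolding bipartite_def adj_def by auto

lemma finite_adj: "bipartite V F E \<Longrightarrow> finite V \<Longrightarrow> finite (adj E X)"
  using adj_subset finite_subset by metis

lemma adj_induced_edges: "X \<subseteq> F' \<Longrightarrow> adj (induced_edges E V' F') X = adj E X \<inter> V'"
  unfolding adj_def induced_edges_def by auto

lemma bipartite_induced_edges: "bipartite V' F' (induced_edges E V' F')"
  unfolding bipartite_def induced_edges_def by auto

lemma self_contained_graph_hall:
  "self_contained_graph V F E \<Longrightarrow> X \<subseteq> F \<Longrightarrow> card X \<le> card (adj E X)"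
  unfolding self_contained_graph_def self_contained_set_def by blast

lemma
  assumes fin: "finite A" "finite B" "finite (adj E A)" "finite (adj E B)"
    and hall: "\<And>X. X \<subseteq> A \<union> B \<Longrightarrow> card X \<le> card (adj E X)"
    and tight: "card A = card (adj E A)" "card B = card (adj E B)"
  shows tight_Int: "card (A \<inter> B) = card (adj E (A \<inter> B))"
    and card_adj_Int_tight_le: "card (adj E A \<inter> adj E B) \<le> card (A \<inter> B)"
proof -
  have "card (A \<union> B) + card (A \<inter> B) = card A + card B"
    using card_Un_Int[OF fin(1,2)] by linarith
  moreover have "card (adj E A \<union> adj E B) + card (adj E A \<inter> adj E B)
      = card (adj E A) + card (adj E B)"
    using card_Un_Int[OF fin(3,4)] by linarith
  moreover have "card (A \<union> B) \<le> card (adj E A \<union> adj E B)"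
    using hall[of "A \<union> B"] by (simp add: adj_Un)
  moreover have "card (A \<inter> B) \<le> card (adj E (A \<inter> B))"
    using hall by blast
  moreover have "card (adj E (A \<inter> B)) \<le> card (adj E A \<inter> adj E B)"
    using adj_Int_subset fin(3) by (metis card_mono finite_Int)
  ultimately show "card (A \<inter> B) = card (adj E (A \<inter> B))"
    and "card (adj E A \<inter> adj E B) \<le> card (A \<inter> B)"
    using tight by linarith+
qed

lemma
  assumes "finite V" "finite F" "bipartite V F E"
    and hall: "\<And>X. X \<subseteq> F \<Longrightarrow> card X \<le> card (adj E X)"
    and S: "minimal_self_contained V F E S" and T: "minimal_self_contained V F E T"
    and "S \<noteq> T"
  shows minimal_self_contained_disjoint: "S \<inter> T = {}"
    and minimal_self_contained_adj_disjoint: "adj E S \<inter> adj E T = {}"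
proof -
  have SF: "S \<subseteq> F" and TF: "T \<subseteq> F"
    and tight: "card S = card (adj E S)" "card T = card (adj E T)"
    using S T unfolding minimal_self_contained_def self_contained_set_def by auto
  have fin: "finite S" "finite T" "finite (adj E S)" "finite (adj E T)"
    using finite_subset[OF SF] finite_subset[OF TF] finite_adj[OF assms(3,1)] assms(2) by auto
  have hall_ST: "card X \<le> card (adj E X)" if "X \<subseteq> S \<union> T" for X
    using that SF TF hall by blast
  note Int_tight = tight_Int[OF fin hall_ST tight]
    and adj_Int_le = card_adj_Int_tight_le[OF fin hall_ST tight]
  show disj: "S \<inter> T = {}"
  proof (rule ccontr)
    assume "S \<inter> T \<noteq> {}"
    moreover have "self_contained_set V F E (S \<inter> T)"
      unfolding self_contained_set_def using SF Int_tight hall by auto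
    ultimately have "\<not> S \<inter> T \<subset> S" "\<not> S \<inter> T \<subset> T"
      using S T unfolding minimal_self_contained_def by blast+
    then have "S \<inter> T = S" "S \<inter> T = T" by blast+
    with \<open>S \<noteq> T\<close> show False by simp
  qed
  show "adj E S \<inter> adj E T = {}"
    using adj_Int_le disj fin by simp
qed

lemma card_le_card_adj_Diff_tight:
  assumes "finite X" "finite S" "finite (adj E (X \<union> S))" "X \<inter> S = {}"
    and hall: "card (X \<union> S) \<le> card (adj E (X \<union> S))"
    and tight: "card S = card (adj E S)"
  shows "card X \<le> card (adj E X - adj E S)"
proof -
  have "card X + card S = card (X \<union> S)"
    using assms(1,2,4) by (simp add: card_Un_disjoint)
  also have "\<dots> \<le> card (adj E (X \<union> S))" by (fact hall)
  also have "adj E (X \<union> S) = (adj E X - adj E S) \<union> adj E S"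
    by (auto simp: adj_Un)
  also have "card \<dots> = card (adj E X - adj E S) + card (adj E S)"
    using assms(3) by (intro card_Un_disjoint) (auto simp: adj_Un)
  finally show ?thesis using tight by simp
qed

context
  fixes V :: "'v set" and F :: "'f set" and E :: "('f \<times> 'v) set" and S :: "'f set"
  assumes bip: "bipartite V F E"
begin

lemma adj_remove: "X \<subseteq> F - S \<Longrightarrow>
    adj (induced_edges E (V - adj E S) (F - S)) X = adj E X - adj E S"
  using adj_induced_edges[of X "F - S" E "V - adj E S"] adj_subset[OF bip, of X] by blast

lemma self_contained_graph_remove_tight:
  assumes "finite V" "finite F" and G: "self_contained_graph V F E"
    and SF: "S \<subseteq> F" and tight: "card S = card (adj E S)"
  shows "self_contained_graph (V - adj E S) (F - S) (induced_edges E (V - adj E S) (F - S))"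
    (is "self_contained_graph ?V' ?F' ?E'")
proof -
  have fin_adj: "finite (adj E X)" for X using finite_adj[OF bip \<open>finite V\<close>] .
  have hall': "card X \<le> card (adj ?E' X)" if X: "X \<subseteq> ?F'" for X
  proof -
    have "finite X" "finite S"
      using X SF finite_subset[of _ F] \<open>finite F\<close> by blast+
    moreover have "X \<inter> S = {}" using X by blast
    moreover have "card (X \<union> S) \<le> card (adj E (X \<union> S))"
      using X SF by (intro self_contained_graph_hall[OF G]) blast
    ultimately show ?thesis
      using card_le_card_adj_Diff_tight[OF _ _ fin_adj _ _ tight] adj_remove[OF X] by simp
  qed
  have card_eq: "card ?F' = card ?V'"
    using G SF tight adj_subset[OF bip, of S] finite_subset[OF SF \<open>finite F\<close>] fin_adj
    by (simp add: card_Diff_subset self_contained_graph_def)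
  have "card (adj ?E' ?F') \<le> card ?V'"
    using adj_subset[OF bipartite_induced_edges] \<open>finite V\<close> by (intro card_mono) simp_all
  with hall'[of ?F'] card_eq have "card ?F' = card (adj ?E' ?F')" by simp
  with card_eq hall' show ?thesis
    unfolding self_contained_graph_def self_contained_set_def by (simp add: subset_trans)
qed

lemma self_contained_set_remove_iff:
  assumes "X \<subseteq> F - S" and "adj E X \<inter> adj E S = {}"
  shows "self_contained_set (V - adj E S) (F - S) (induced_edges E (V - adj E S) (F - S)) X
    \<longleftrightarrow> self_contained_set V F E X"
proof -
  have "adj (induced_edges E (V - adj E S) (F - S)) Y = adj E Y" if "Y \<subseteq> X" for Y
    using adj_remove[of Y] adj_mono[OF that, of E] assms that by blast
  then show ?thesis
    using assms(1) unfolding self_contained_set_def by auto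
qed

lemma minimal_self_contained_remove:
  assumes TS: "T \<inter> S = {}" and adj_TS: "adj E T \<inter> adj E S = {}"
    and T: "minimal_self_contained V F E T"
  shows "minimal_self_contained (V - adj E S) (F - S) (induced_edges E (V - adj E S) (F - S)) T"
proof -
  have "T \<subseteq> F"
    using T unfolding minimal_self_contained_def self_contained_set_def by simp
  with TS have TF': "T \<subseteq> F - S" by blast
  have sc_iff: "self_contained_set (V - adj E S) (F - S) (induced_edges E (V - adj E S) (F - S)) U
      \<longleftrightarrow> self_contained_set V F E U" if U: "U \<subseteq> T" for U
  proof (rule self_contained_set_remove_iff)
    show "U \<subseteq> F - S" using U TF' by blast
    show "adj E U \<inter> adj E S = {}" using adj_TS adj_mono[OF U, of E] by blast
  qed
  have "\<not> self_contained_set (V - adj E S) (F - S) (induced_edges E (V - adj E S) (F - S)) U"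
    if "U \<subset> T" "U \<noteq> {}" for U
    using sc_iff[of U] that T unfolding minimal_self_contained_def by blast
  with sc_iff[OF order_refl] T show ?thesis
    unfolding minimal_self_contained_def by blast
qed

end

theorem lemma33:
  fixes V :: "'v set" and F :: "'f set" and E :: "('f \<times> 'v) set" and S :: "'f set"
  assumes "finite V" and "finite F" and "bipartite V F E"
    and "self_contained_graph V F E"
    and "S \<in> {X. minimal_self_contained V F E X}"
  shows "self_contained_graph (V - adj E S) (F - S) (induced_edges E (V - adj E S) (F - S)) \<and>
    (\<forall>T \<in> {X. minimal_self_contained V F E X} - {S}.
       minimal_self_contained (V - adj E S) (F - S) (induced_edges E (V - adj E S) (F - S)) T)"
proof (intro conjI ballI)
  have S: "minimal_self_contained V F E S" using assms(5) by simp
  then have "S \<subseteq> F" "card S = card (adj E S)"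
    unfolding minimal_self_contained_def self_contained_set_def by auto
  then show "self_contained_graph (V - adj E S) (F - S) (induced_edges E (V - adj E S) (F - S))"
    by (rule self_contained_graph_remove_tight[OF assms(3,1,2,4)])
  fix T assume "T \<in> {X. minimal_self_contained V F E X} - {S}"
  then have T: "minimal_self_contained V F E T" and "T \<noteq> S" by auto
  note hall = self_contained_graph_hall[OF assms(4)]
  show "minimal_self_contained (V - adj E S) (F - S) (induced_edges E (V - adj E S) (F - S)) T"
  proof (rule minimal_self_contained_remove[OF assms(3) _ _ T])
    show "T \<inter> S = {}"
      by (rule minimal_self_contained_disjoint[OF assms(1-3) hall T S \<open>T \<noteq> S\<close>])
    show "adj E T \<inter> adj E S = {}"
      by (rule minimal_self_contained_adj_disjoint[OF assms(1-3) hall T S \<open>T \<noteq> S\<close>])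
  qed
qed

end
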